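(* For $n\in\mathbb{N}$ and $k\in\mathbb{Z}$ with $k<0$, let $a(n,k)$ be the number of $x\in\mathbb{Z}^n$ with $x_j\le1$ for all $j=1,\dots,n$ and $\sum_{j=1}^nx_j=k$. Then \[ a(n,k)\le a(n)\{|k|+\tfrac32 n\}^{n-1},\qquad a(n)=\frac{\sqrt n}{\alpha(n-1)}\frac{2^{n-1}}{(n-1)!}, \] where $\alpha(m)$ is the volume of the unit ball in $\mathbb{R}^m$ and $\alpha(0)=1$. *)

theory Defs
  imports "HOL-Analysis.Analysis"
begin

definition acount :: "nat \<Rightarrow> int \<Rightarrow> nat" where
  "acount n k = card {xs :: int list. length xs = n \<and> (\<forall>j<n. xs ! j \<le> 1) \<and> sum_list xs = k}"

text \<open>alpha m = volume of the unit ball in R^m (library: content_ball gives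
  content (ball c 1) = unit_ball_vol DIM('a)); alpha 0 = 1.\<close>
definition alpha :: "nat \<Rightarrow> real" where
  "alpha m = unit_ball_vol (real m)"

definition aconst :: "nat \<Rightarrow> real" where
  "aconst n = sqrt (real n) / alpha (n - 1) * 2 ^ (n - 1) / fact (n - 1)"

end

theory Submission
  imports Defs
begin

(* The substitution x_j = 1 - y_j turns the points counted by a(n,k) into
   compositions of N = n - k into n nonnegative parts, so by stars and bars
   a(n,k) = C(N + b, b) with b = n - 1, i.e. the rising factorial
   (N+1)(N+2)...(N+b) divided by b!.  Pairing the i-th factor of a rising
   factorial with the i-th factor from the end and applying AM-GM bounds it by
   the b-th power of the midpoint N + (b+1)/2 = |k| + 3n/2.  Finally the
   constant a(n) dominates 1/b!, because sqrt n >= 1 and the volume of the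
   unit ball in R^b is at most 2^b (shown via the two-step recursion of the
   volume formula). *)

lemma unit_ball_vol_plus_2:
  assumes "m \<ge> 0"
  shows "unit_ball_vol (m + 2) = 2 * pi / (m + 2) * unit_ball_vol m"
proof -
  have "m / 2 + 1 \<notin> \<int>\<^sub>\<le>\<^sub>0"
    using assms by (auto elim!: nonpos_Ints_cases)
  then have Gamma_step: "Gamma ((m + 2) / 2 + 1) = (m / 2 + 1) * Gamma (m / 2 + 1)"
    using Gamma_plus1[of "m / 2 + 1"] by (simp add: field_simps)
  have pi_step: "pi powr ((m + 2) / 2) = pi * pi powr (m / 2)"
    by (simp add: add_divide_distrib powr_add)
  show ?thesis
    unfolding unit_ball_vol_def Gamma_step pi_step using assms by (simp add: field_simps)
qed

text \<open>The unit ball in R^m lies in the cube [-1,1]^m, so its volume is at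
  most 2^m; we derive this from the recursion, using 2 pi/(m+2) \<le> 4.\<close>

lemma unit_ball_vol_le_power_2: "unit_ball_vol (real m) \<le> 2 ^ m"
proof (induction m rule: nat_less_induct)
  case (1 m)
  show ?case
  proof (cases "m < 2")
    case True
    then have "m = 0 \<or> m = 1" by auto
    then show ?thesis by auto
  next
    case False
    then obtain j where m: "m = j + 2"
      by (metis add.commute le_add_diff_inverse not_less)
    have "unit_ball_vol (real m) = 2 * pi / (real j + 2) * unit_ball_vol (real j)"
      using unit_ball_vol_plus_2[of "real j"] m by (simp add: add.commute)
    also have "\<dots> \<le> 4 * 2 ^ j"
    proof (rule mult_mono)
      show "2 * pi / (real j + 2) \<le> 4"
        using pi_less_4 by (simp add: field_simps)
      show "unit_ball_vol (real j) \<le> 2 ^ j"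
        using "1" m by simp
    qed auto
    finally show ?thesis
      using m by (simp add: power_add)
  qed
qed

text \<open>Multiplying the
  product with its reversal pairs factors with constant sum 2c.\<close>

lemma pochhammer_le_midpoint_power:
  fixes a :: real
  assumes "a \<ge> 0"
  shows "pochhammer a b \<le> (a + (real b - 1) / 2) ^ b"
proof (cases "b = 0")
  case False
  define c where "c = a + (real b - 1) / 2"
  have pair_bound: "(a + real i) * (a + real (b - 1 - i)) \<le> c ^ 2" if "i < b" for i
  proof -
    have "c ^ 2 - (a + real i) * (a + real (b - 1 - i)) = (real b - 1 - 2 * real i) ^ 2 / 4"
      using that by (simp add: c_def of_nat_diff power2_eq_square field_simps)
    then show ?thesis
      by (smt (verit) zero_le_power2 divide_nonneg_pos)
  qed
  have "pochhammer a b ^ 2 = (\<Prod>i<b. (a + real i) * (a + real (b - 1 - i)))"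
    unfolding pochhammer_prod power2_eq_square prod.distrib
    by (subst (2) prod.atLeastLessThan_rev) (simp add: atLeast0LessThan)
  also have "\<dots> \<le> (\<Prod>i<b. c ^ 2)"
    using pair_bound assms by (intro prod_mono) auto
  also have "\<dots> = (c ^ b) ^ 2"
    by (simp add: power_mult[symmetric] mult.commute)
  finally have "pochhammer a b ^ 2 \<le> (c ^ b) ^ 2" .
  moreover have "c \<ge> 0"
    using False assms by (simp add: c_def)
  ultimately show ?thesis
    unfolding c_def by (meson power2_le_imp_le zero_le_power)
qed simp

text \<open>Stars and bars: for k \<le> n, the substitution x_j = 1 - y_j is a
  bijection onto compositions of n - k into n nonnegative parts, so
  a(n,k) = C(n - k + n - 1, n - 1).\<close>

lemma acount_binomial:
  assumes "k \<le> int n" and "n \<ge> 1"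
  shows "acount n k = (nat (int n - k) + (n - 1)) choose (n - 1)"
proof -
  define N where "N = nat (int n - k)"
  define shift :: "nat list \<Rightarrow> int list" where "shift = map (\<lambda>y. 1 - int y)"
  have "inj shift"
    unfolding shift_def by (intro inj_mapI inj_onI) simp
  have sum_shift: "sum_list (shift ys) = int (length ys) - int (sum_list ys)" for ys
    unfolding shift_def by (induction ys) auto
  have "{xs :: int list. length xs = n \<and> (\<forall>j<n. xs ! j \<le> 1) \<and> sum_list xs = k}
      = shift ` {ys. length ys = n \<and> sum_list ys = N}"
  proof (intro equalityI subsetI)
    fix xs :: "int list"
    assume "xs \<in> {xs. length xs = n \<and> (\<forall>j<n. xs ! j \<le> 1) \<and> sum_list xs = k}"
    then have xs: "length xs = n" "\<forall>x\<in>set xs. x \<le> 1" "sum_list xs = k"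
      by (auto simp: in_set_conv_nth)
    define ys where "ys = map (\<lambda>x. nat (1 - x)) xs"
    have "shift ys = xs"
      using xs(2) unfolding shift_def ys_def by (induction xs) auto
    moreover have "length ys = n" and "sum_list ys = N"
      using sum_shift[of ys] xs \<open>shift ys = xs\<close> by (auto simp: ys_def N_def)
    ultimately show "xs \<in> shift ` {ys. length ys = n \<and> sum_list ys = N}"
      by blast
  next
    fix xs
    assume "xs \<in> shift ` {ys. length ys = n \<and> sum_list ys = N}"
    then obtain ys where "length ys = n" "sum_list ys = N" "xs = shift ys"
      by auto
    then show "xs \<in> {xs. length xs = n \<and> (\<forall>j<n. xs ! j \<le> 1) \<and> sum_list xs = k}"
      using sum_shift[of ys] assms by (auto simp: shift_def N_def)
  qed
  then have "acount n k = card {ys :: nat list. length ys = n \<and> sum_list ys = N}"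
    unfolding acount_def using card_image[OF inj_on_subset[OF \<open>inj shift\<close>]] by simp
  also have "\<dots> = (N + (n - 1)) choose N"
    using card_length_sum_list[of n N] assms by simp
  also have "\<dots> = (N + (n - 1)) choose (n - 1)"
    using binomial_symmetric[of N "N + (n - 1)"] by simp
  finally show ?thesis
    unfolding N_def .
qed

text \<open>Since sqrt n \<ge> 1 and alpha(n-1) \<le> 2^(n-1), the constant a(n) is at
  least 1/(n-1)!.\<close>

lemma inverse_fact_le_aconst:
  assumes "n \<ge> 1"
  shows "1 / fact (n - 1) \<le> aconst n"
proof -
  have alpha_bounds: "0 < alpha (n - 1)" "alpha (n - 1) \<le> 2 ^ (n - 1)"
    unfolding alpha_def using unit_ball_vol_le_power_2[of "n - 1"] by auto
  have "(1::real) \<le> sqrt (real n)"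
    using assms by simp
  then have "1 * 2 ^ (n - 1) \<le> sqrt (real n) * (2::real) ^ (n - 1)"
    by (intro mult_right_mono) auto
  then have "alpha (n - 1) \<le> sqrt (real n) * 2 ^ (n - 1)"
    using alpha_bounds(2) by linarith
  then have "1 \<le> sqrt (real n) / alpha (n - 1) * 2 ^ (n - 1)"
    using alpha_bounds(1) by (simp add: field_simps)
  then have "1 / fact (n - 1) \<le> sqrt (real n) / alpha (n - 1) * 2 ^ (n - 1) / fact (n - 1)"
    by (intro divide_right_mono) auto
  then show ?thesis
    unfolding aconst_def .
qed

theorem lemma5p1:
  fixes n :: nat and k :: int
  assumes "n \<ge> 1" and "k < 0"
  shows "real (acount n k) \<le> aconst n * (real_of_int \<bar>k\<bar> + 3 / 2 * real n) ^ (n - 1)"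
proof -
  define b where "b = n - 1"
  define N where "N = nat (int n - k)"
  define c where "c = real_of_int \<bar>k\<bar> + 3 / 2 * real n"
  have midpoint: "real N + 1 + (real b - 1) / 2 = c"
    using assms by (simp add: b_def N_def c_def of_nat_diff field_simps)
  have "real (acount n k) = real ((N + b) choose b)"
    using acount_binomial[of k n] assms by (simp add: N_def b_def)
  also have "\<dots> = pochhammer (real N + 1) b / fact b"
    by (simp add: binomial_gbinomial gbinomial_pochhammer')
  also have "\<dots> \<le> c ^ b / fact b"
    using pochhammer_le_midpoint_power[of "real N + 1" b] midpoint
    by (simp add: divide_right_mono)
  also have "\<dots> = 1 / fact b * c ^ b"
    by simp
  also have "\<dots> \<le> aconst n * c ^ b"
    using inverse_fact_le_aconst[OF assms(1)] unfolding b_def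
    by (intro mult_right_mono) (auto simp: c_def)
  finally show ?thesis
    unfolding b_def c_def .
qed

end
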